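(* Let $s_{\mathrm{pub}}$ be a public state of a finite two-player zero-sum game with perfect recall, and let $\beta=(\beta_1,\beta_2)$ be a public belief state at $s_{\mathrm{pub}}$. Let $\pi^*$ be any Nash equilibrium of the subgame rooted at $\beta$. Then there exist a concave function $\tilde V_1:\mathbb{R}_{\ge 0}^{S_1(s_{\mathrm{pub}})}\to\mathbb{R}$ extending $V_1$ to unnormalized beliefs, i.e. with $\tilde V_1(x)=V_1\big((x,\beta_2)\big)$ for every probability distribution $x$ on $S_1(s_{\mathrm{pub}})$, and a supergradient $\bar g\in\mathbb{R}^{S_1(s_{\mathrm{pub}})}$ of $\tilde V_1$ at $\beta_1$ (that is, $\tilde V_1(y)\le \tilde V_1(\beta_1)+\bar g\cdot(y-\beta_1)$ for all $y\in\mathbb{R}_{\ge0}^{S_1(s_{\mathrm{pub}})}$), such that for every infostate $s_1\in S_1(s_{\mathrm{pub}})$, $$v_1^{\pi^*}(s_1\mid\beta)=V_1(\beta)+\bar g\cdot \hat s_1,$$ where $\hat s_1$ is the unit coordinate vector in direction $s_1$.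
   Context: Setting: a finite two-player zero-sum game (rewards satisfy $\mathcal R_1=-\mathcal R_2$) with perfect recall, described by world states, joint actions, a stochastic transition function, and for each player private and public observations. A history $h$ is a finite sequence of world states and joint actions; an infostate $s_i$ of player $i$ is the sequence of player $i$'s observations and own actions; $\mathcal H(s_i)$ is the set of histories consistent with $s_i$ and $s_i(h)$ is the infostate of player $i$ at $h$. A public state $s_{\mathrm{pub}}$ is a sequence of public observations; $\mathcal H(s_{\mathrm{pub}})$ is the set of histories consistent with it and $S_i(s_{\mathrm{pub}})$ the set of infostates of player $i$ consistent with it. A policy maps infostates to distributions over legal actions; $v_i^{\pi}(h)$ is the expected sum of future rewards of player $i$ from history $h$ when the profile $\pi$ is played. A public belief state (PBS) at $s_{\mathrm{pub}}$ is $\beta=(\beta_1,\beta_2)$ with $\beta_i$ a probability distribution on $S_i(s_{\mathrm{pub}})$. It induces a distribution $p(\cdot\mid\beta)$ on $\mathcal H(s_{\mathrm{pub}})$ of the form $p(h\mid\beta)=\beta_1(s_1(h))\,p(h\mid s_1(h),\beta_2)$, where for each $s_1$, $p(\cdot\mid s_1,\beta_2)$ is a probability distribution on $\mathcal H(s_1)\cap\mathcal H(s_{\mathrm{pub}})$ determined only by $s_1$ and $\beta_2$. The subgame rooted at $\beta$ is the game in which a history $h$ is drawn from $p(\cdot\mid\beta)$ (each player learning only their own infostate) and play then continues as in the original game. For a profile $\pi$ of this subgame, $V_1^{\pi}(\beta)=\sum_{h\in\mathcal H(s_{\mathrm{pub}})}p(h\mid\beta)v_1^{\pi}(h)$, and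 $V_1(\beta)$ denotes the value of the subgame to player 1 (the common value $V_1^{\pi^*}(\beta)$ over Nash equilibria $\pi^*$ of the subgame). The infostate value is $$v_1^{\pi^*}(s_1\mid\beta)=\max_{\pi_1}\sum_{h\in\mathcal H(s_1)}p(h\mid s_1,\beta_2)\,v_1^{\langle\pi_1,\pi_2^*\rangle}(h).$$ *)

theory Defs
  imports "HOL-Analysis.Analysis"
begin

text \<open>
* The finite type 's1 is the set S_1(s_pub) of player-1 infostates consistent
   with s_pub; 's2 is S_2(s_pub); 'h is the set H(s_pub) of histories
   consistent with s_pub.  info1 h / info2 h are the infostates s_1(h), s_2(h).
 * cond s1 h is the conditional distribution p(h | s1, beta2) (beta2 is fixed
   throughout the statement, so it is folded into this kernel).
 * By perfect recall, all infostates a player can reach in the continuation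
   from a history h extend that player's infostate at h.  Hence a policy of
   player 1 in the subgame is a family, indexed by s1, of continuation policies
   after s1.  By Kuhn's theorem (perfect recall) behavioural policies are
   realization-equivalent to mixed strategies over finitely many pure
   continuation plans; P1 s1 (resp. P2 s2) is the finite nonempty set of pure
   continuation plans of player 1 after s1 (resp. player 2 after s2), and
   u h a b is the expected future reward of player 1 from history h when the
   plans a, b are played (player 2's reward is - u h a b: zero-sum).
\<close>

record ('s1, 's2, 'h, 'a, 'b) subgame =
  info1 :: "'h \<Rightarrow> 's1"
  info2 :: "'h \<Rightarrow> 's2"
  cond  :: "'s1 \<Rightarrow> 'h \<Rightarrow> real"
  P1    :: "'s1 \<Rightarrow> 'a set"
  P2    :: "'s2 \<Rightarrow> 'b set"
  u     :: "'h \<Rightarrow> 'a \<Rightarrow> 'b \<Rightarrow> real"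

definition wf_subgame ::
  "('s1::finite, 's2::finite, 'h::finite, 'a, 'b) subgame \<Rightarrow> bool" where
  "wf_subgame G \<longleftrightarrow>
     (\<forall>s. finite (P1 G s) \<and> P1 G s \<noteq> {}) \<and>
     (\<forall>s. finite (P2 G s) \<and> P2 G s \<noteq> {}) \<and>
     (\<forall>s h. 0 \<le> cond G s h) \<and>
     (\<forall>s. (\<Sum>h\<in>{h. info1 G h = s}. cond G s h) = 1)"

definition prob_vec :: "real ^ 's::finite \<Rightarrow> bool" where
  "prob_vec x \<longleftrightarrow> (\<forall>i. 0 \<le> x $ i) \<and> (\<Sum>i\<in>UNIV. x $ i) = 1"

definition nonneg_orthant :: "(real ^ 's::finite) set" where
  "nonneg_orthant = {x. \<forall>i. 0 \<le> x $ i}"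

definition pol1 :: "('s1::finite, 's2::finite, 'h::finite, 'a, 'b) subgame \<Rightarrow> ('s1 \<Rightarrow> 'a \<Rightarrow> real) set" where
  "pol1 G = {\<sigma>. \<forall>s. (\<forall>a\<in>P1 G s. 0 \<le> \<sigma> s a) \<and> (\<Sum>a\<in>P1 G s. \<sigma> s a) = 1}"

definition pol2 :: "('s1::finite, 's2::finite, 'h::finite, 'a, 'b) subgame \<Rightarrow> ('s2 \<Rightarrow> 'b \<Rightarrow> real) set" where
  "pol2 G = {\<sigma>. \<forall>s. (\<forall>b\<in>P2 G s. 0 \<le> \<sigma> s b) \<and> (\<Sum>b\<in>P2 G s. \<sigma> s b) = 1}"

definition hval :: "('s1::finite, 's2::finite, 'h::finite, 'a, 'b) subgame \<Rightarrow>
    ('s1 \<Rightarrow> 'a \<Rightarrow> real) \<Rightarrow> ('s2 \<Rightarrow> 'b \<Rightarrow> real) \<Rightarrow> 'h \<Rightarrow> real" where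
  "hval G \<sigma>1 \<sigma>2 h =
     (\<Sum>a\<in>P1 G (info1 G h). \<Sum>b\<in>P2 G (info2 G h).
        \<sigma>1 (info1 G h) a * \<sigma>2 (info2 G h) b * u G h a b)"

definition pbs_prob :: "('s1::finite, 's2::finite, 'h::finite, 'a, 'b) subgame \<Rightarrow> real ^ 's1 \<Rightarrow> 'h \<Rightarrow> real" where
  "pbs_prob G x h = x $ (info1 G h) * cond G (info1 G h) h"

definition Vpol :: "('s1::finite, 's2::finite, 'h::finite, 'a, 'b) subgame \<Rightarrow> real ^ 's1 \<Rightarrow>
    ('s1 \<Rightarrow> 'a \<Rightarrow> real) \<Rightarrow> ('s2 \<Rightarrow> 'b \<Rightarrow> real) \<Rightarrow> real" where
  "Vpol G x \<sigma>1 \<sigma>2 = (\<Sum>h\<in>UNIV. pbs_prob G x h * hval G \<sigma>1 \<sigma>2 h)"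

definition is_NE :: "('s1::finite, 's2::finite, 'h::finite, 'a, 'b) subgame \<Rightarrow> real ^ 's1 \<Rightarrow>
    ('s1 \<Rightarrow> 'a \<Rightarrow> real) \<Rightarrow> ('s2 \<Rightarrow> 'b \<Rightarrow> real) \<Rightarrow> bool" where
  "is_NE G x \<sigma>1 \<sigma>2 \<longleftrightarrow> \<sigma>1 \<in> pol1 G \<and> \<sigma>2 \<in> pol2 G \<and>
     (\<forall>\<tau>1\<in>pol1 G. Vpol G x \<tau>1 \<sigma>2 \<le> Vpol G x \<sigma>1 \<sigma>2) \<and>
     (\<forall>\<tau>2\<in>pol2 G. - Vpol G x \<sigma>1 \<tau>2 \<le> - Vpol G x \<sigma>1 \<sigma>2)"

text \<open>V_1((x, beta2)): the value of the zero-sum subgame to player 1 (min-max value;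
  it coincides with V_1^pi*((x,beta2)) for every Nash equilibrium pi*).\<close>
definition game_value :: "('s1::finite, 's2::finite, 'h::finite, 'a, 'b) subgame \<Rightarrow> real ^ 's1 \<Rightarrow> real" where
  "game_value G x = (INF \<sigma>2\<in>pol2 G. SUP \<sigma>1\<in>pol1 G. Vpol G x \<sigma>1 \<sigma>2)"

definition info_value :: "('s1::finite, 's2::finite, 'h::finite, 'a, 'b) subgame \<Rightarrow>
    ('s2 \<Rightarrow> 'b \<Rightarrow> real) \<Rightarrow> 's1 \<Rightarrow> real" where
  "info_value G \<sigma>2 s1 =
     (SUP \<sigma>1\<in>pol1 G. \<Sum>h\<in>{h. info1 G h = s1}. cond G s1 h * hval G \<sigma>1 \<sigma>2 h)"

end

theory Submission
  imports Defs
begin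

(* Against a fixed policy pi_2 of player 2, player 1's payoff from the histories at an infostate
   s depends only on player 1's policy at s; call it F(s).  Since V_1^pi((x, beta2)) =
   sum_s x_s F(s), a best response can be assembled infostate by infostate, and the
   best-response value against pi_2 is the linear function L_pi2(x) = sum_s x_s v_1(s | pi_2).
   So V_1((x, beta2)) = inf_pi2 L_pi2(x) is concave on the orthant, and at an equilibrium the
   infimum is attained at pi_2^*: L_pi2^* supports V_1 at beta_1.  Adding the term
   V_1(beta) (1 - sum_s x_s), which vanishes on beliefs, turns L_pi2^* into a supporting
   hyperplane with gradient g_s = v_1(s | beta) - V_1(beta). *)

lemma concave_on_cong:
  assumes "\<And>x. x \<in> S \<Longrightarrow> f x = g x"
  shows "concave_on S f \<longleftrightarrow> concave_on S g"
  using assms by (auto simp: concave_on_iff convex_def)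

lemma concave_on_INF:
  fixes f :: "'t \<Rightarrow> 'a::real_vector \<Rightarrow> real"
  assumes "T \<noteq> {}" and "convex S"
    and concave: "\<And>t. t \<in> T \<Longrightarrow> concave_on S (f t)"
    and bdd: "\<And>x. x \<in> S \<Longrightarrow> bdd_below ((\<lambda>t. f t x) ` T)"
  shows "concave_on S (\<lambda>x. INF t\<in>T. f t x)"
  unfolding concave_on_iff
proof (intro conjI ballI allI impI \<open>convex S\<close>)
  fix x y and u v :: real
  assume xy: "x \<in> S" "y \<in> S" and uv: "0 \<le> u" "0 \<le> v" "u + v = 1"
  show "u * (INF t\<in>T. f t x) + v * (INF t\<in>T. f t y) \<le> (INF t\<in>T. f t (u *\<^sub>R x + v *\<^sub>R y))"
  proof (rule cINF_greatest[OF \<open>T \<noteq> {}\<close>])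
    fix t assume t: "t \<in> T"
    have "u * (INF t\<in>T. f t x) + v * (INF t\<in>T. f t y) \<le> u * f t x + v * f t y"
      using uv by (intro add_mono mult_left_mono cINF_lower bdd xy t) auto
    also have "\<dots> \<le> f t (u *\<^sub>R x + v *\<^sub>R y)"
      using concave[OF t] xy uv by (auto simp: concave_on_iff)
    finally show "u * (INF t\<in>T. f t x) + v * (INF t\<in>T. f t y) \<le> f t (u *\<^sub>R x + v *\<^sub>R y)" .
  qed
qed

lemma concave_on_mult_one_minus_sum:
  fixes c :: real
  assumes "convex S"
  shows "concave_on S (\<lambda>x :: real ^ 'n::finite. c * (1 - (\<Sum>i\<in>UNIV. x $ i)))"
  unfolding concave_on_iff
proof (intro conjI ballI allI impI assms)
  fix x y :: "real ^ 'n" and u v :: real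
  assume "u + v = 1"
  then show "u * (c * (1 - (\<Sum>i\<in>UNIV. x $ i))) + v * (c * (1 - (\<Sum>i\<in>UNIV. y $ i)))
      \<le> c * (1 - (\<Sum>i\<in>UNIV. (u *\<^sub>R x + v *\<^sub>R y) $ i))"
    by (simp add: sum.distrib sum_distrib_left algebra_simps) (simp flip: distrib_left)
qed

lemma convex_nonneg_orthant: "convex nonneg_orthant"
  by (auto simp: convex_def nonneg_orthant_def)

lemma cSUP_sum_coordinatewise:
  fixes F :: "'i::finite \<Rightarrow> ('i \<Rightarrow> 'p) \<Rightarrow> real" and c :: "'i \<Rightarrow> real"
  assumes "P \<noteq> {}"
    and glue: "\<And>f. (\<And>i. f i \<in> P) \<Longrightarrow> (\<lambda>i. f i i) \<in> P"
    and local: "\<And>i \<sigma> \<sigma>'. \<sigma> i = \<sigma>' i \<Longrightarrow> F i \<sigma> = F i \<sigma>'"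
    and bdd: "\<And>i. bdd_above (F i ` P)"
    and c: "\<And>i. 0 \<le> c i"
  shows "(SUP \<sigma>\<in>P. \<Sum>i\<in>UNIV. c i * F i \<sigma>) = (\<Sum>i\<in>UNIV. c i * (SUP \<sigma>\<in>P. F i \<sigma>))"
proof (rule antisym)
  have le: "(\<Sum>i\<in>UNIV. c i * F i \<sigma>) \<le> (\<Sum>i\<in>UNIV. c i * (SUP \<sigma>\<in>P. F i \<sigma>))" if "\<sigma> \<in> P" for \<sigma>
    using that by (intro sum_mono mult_left_mono cSUP_upper bdd c)
  then show "(SUP \<sigma>\<in>P. \<Sum>i\<in>UNIV. c i * F i \<sigma>) \<le> (\<Sum>i\<in>UNIV. c i * (SUP \<sigma>\<in>P. F i \<sigma>))"
    using \<open>P \<noteq> {}\<close> by (intro cSUP_least)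
  have bdd_sum: "bdd_above ((\<lambda>\<sigma>. \<Sum>i\<in>UNIV. c i * F i \<sigma>) ` P)"
    using le by (intro bdd_aboveI2)
  let ?C = "\<Sum>i\<in>UNIV. c i"
  show "(\<Sum>i\<in>UNIV. c i * (SUP \<sigma>\<in>P. F i \<sigma>)) \<le> (SUP \<sigma>\<in>P. \<Sum>i\<in>UNIV. c i * F i \<sigma>)"
  proof (rule field_le_epsilon)
    fix e :: real assume "0 < e"
    define \<epsilon> where "\<epsilon> = e / (?C + 1)"
    have "?C \<ge> 0" using c by (simp add: sum_nonneg)
    then have "0 < \<epsilon>" and \<epsilon>_C: "\<epsilon> * ?C \<le> e"
      using \<open>0 < e\<close> by (auto simp: \<epsilon>_def field_simps)
    have "\<exists>\<sigma>\<in>P. (SUP \<sigma>\<in>P. F i \<sigma>) - \<epsilon> < F i \<sigma>" for i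
      using \<open>0 < \<epsilon>\<close> less_cSUP_iff[OF \<open>P \<noteq> {}\<close> bdd, of "(SUP \<sigma>\<in>P. F i \<sigma>) - \<epsilon>" i]
      by simp
    then obtain f where f: "\<And>i. f i \<in> P" "\<And>i. (SUP \<sigma>\<in>P. F i \<sigma>) - \<epsilon> < F i (f i)"
      by metis
    have glued: "F i (\<lambda>j. f j j) = F i (f i)" for i
      by (rule local) simp
    have "(\<Sum>i\<in>UNIV. c i * (SUP \<sigma>\<in>P. F i \<sigma>)) - \<epsilon> * ?C
        = (\<Sum>i\<in>UNIV. c i * ((SUP \<sigma>\<in>P. F i \<sigma>) - \<epsilon>))"
      by (simp add: algebra_simps sum_subtractf sum_distrib_left)
    also have "\<dots> \<le> (\<Sum>i\<in>UNIV. c i * F i (\<lambda>j. f j j))"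
      using f(2) by (intro sum_mono mult_left_mono c) (simp add: glued less_imp_le)
    also have "\<dots> \<le> (SUP \<sigma>\<in>P. \<Sum>i\<in>UNIV. c i * F i \<sigma>)"
      by (rule cSUP_upper[OF glue[OF f(1)] bdd_sum])
    finally show "(\<Sum>i\<in>UNIV. c i * (SUP \<sigma>\<in>P. F i \<sigma>)) \<le> (SUP \<sigma>\<in>P. \<Sum>i\<in>UNIV. c i * F i \<sigma>) + e"
      using \<epsilon>_C by linarith
  qed
qed

lemma member_le_one_if_sum_eq_one:
  fixes p :: "'a \<Rightarrow> real"
  assumes "finite A" "\<forall>a\<in>A. 0 \<le> p a" "sum p A = 1" "a \<in> A"
  shows "p a \<le> 1"
  using member_le_sum[of a A p] assms by auto

lemma pol1_nonempty:
  assumes "wf_subgame G"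
  shows "pol1 G \<noteq> {}"
proof -
  have "(\<lambda>s a. 1 / real (card (P1 G s))) \<in> pol1 G"
    using assms by (auto simp: pol1_def wf_subgame_def)
  then show ?thesis by blast
qed

lemma pol2_nonempty:
  assumes "wf_subgame G"
  shows "pol2 G \<noteq> {}"
proof -
  have "(\<lambda>s b. 1 / real (card (P2 G s))) \<in> pol2 G"
    using assms by (auto simp: pol2_def wf_subgame_def)
  then show ?thesis by blast
qed

lemma abs_hval_le:
  assumes wf: "wf_subgame G" and "\<sigma> \<in> pol1 G" and "\<tau> \<in> pol2 G"
  shows "\<bar>hval G \<sigma> \<tau> h\<bar> \<le> (\<Sum>a\<in>P1 G (info1 G h). \<Sum>b\<in>P2 G (info2 G h). \<bar>u G h a b\<bar>)"
proof -
  let ?s = "info1 G h" and ?t = "info2 G h"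
  have \<sigma>: "0 \<le> \<sigma> ?s a \<and> \<sigma> ?s a \<le> 1" if "a \<in> P1 G ?s" for a
  proof -
    have "finite (P1 G ?s)" using wf by (simp add: wf_subgame_def)
    with assms(2) that show ?thesis
      unfolding pol1_def by (blast intro: member_le_one_if_sum_eq_one)
  qed
  have \<tau>: "0 \<le> \<tau> ?t b \<and> \<tau> ?t b \<le> 1" if "b \<in> P2 G ?t" for b
  proof -
    have "finite (P2 G ?t)" using wf by (simp add: wf_subgame_def)
    with assms(3) that show ?thesis
      unfolding pol2_def by (blast intro: member_le_one_if_sum_eq_one)
  qed
  have "\<bar>hval G \<sigma> \<tau> h\<bar> \<le> (\<Sum>a\<in>P1 G ?s. \<Sum>b\<in>P2 G ?t. \<bar>\<sigma> ?s a * \<tau> ?t b * u G h a b\<bar>)"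
    unfolding hval_def by (rule order_trans[OF sum_abs sum_mono[OF sum_abs]])
  also have "\<dots> \<le> (\<Sum>a\<in>P1 G ?s. \<Sum>b\<in>P2 G ?t. \<bar>u G h a b\<bar>)"
  proof (intro sum_mono)
    fix a b assume "a \<in> P1 G ?s" "b \<in> P2 G ?t"
    with \<sigma> \<tau> have "0 \<le> \<sigma> ?s a * \<tau> ?t b" "\<sigma> ?s a * \<tau> ?t b \<le> 1"
      by (simp_all add: mult_le_one)
    then show "\<bar>\<sigma> ?s a * \<tau> ?t b * u G h a b\<bar> \<le> \<bar>u G h a b\<bar>"
      by (simp add: abs_mult mult_left_le_one_le)
  qed
  finally show ?thesis .
qed

definition infostate_payoff :: "('s1::finite, 's2::finite, 'h::finite, 'a, 'b) subgame \<Rightarrow>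
    ('s1 \<Rightarrow> 'a \<Rightarrow> real) \<Rightarrow> ('s2 \<Rightarrow> 'b \<Rightarrow> real) \<Rightarrow> 's1 \<Rightarrow> real" where
  "infostate_payoff G \<sigma> \<tau> s = (\<Sum>h\<in>{h. info1 G h = s}. cond G s h * hval G \<sigma> \<tau> h)"

lemma info_value_eq_SUP_infostate_payoff:
  "info_value G \<tau> s = (SUP \<sigma>\<in>pol1 G. infostate_payoff G \<sigma> \<tau> s)"
  by (simp add: info_value_def infostate_payoff_def)

lemma infostate_payoff_cong:
  "\<sigma> s = \<sigma>' s \<Longrightarrow> infostate_payoff G \<sigma> \<tau> s = infostate_payoff G \<sigma>' \<tau> s"
  unfolding infostate_payoff_def hval_def by (auto intro!: sum.cong)

lemma Vpol_eq_sum_infostate_payoff: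
  fixes G :: "('s1::finite, 's2::finite, 'h::finite, 'a, 'b) subgame"
  shows "Vpol G x \<sigma> \<tau> = (\<Sum>s\<in>UNIV. x $ s * infostate_payoff G \<sigma> \<tau> s)"
proof -
  have "Vpol G x \<sigma> \<tau> = (\<Sum>s\<in>UNIV. \<Sum>h\<in>{h\<in>UNIV. info1 G h = s}. pbs_prob G x h * hval G \<sigma> \<tau> h)"
    unfolding Vpol_def by (rule sum.group[symmetric]) auto
  then show ?thesis
    by (simp add: infostate_payoff_def pbs_prob_def sum_distrib_left mult.assoc)
qed

lemma infostate_payoff_bounded:
  assumes wf: "wf_subgame G"
  obtains B where
    "\<And>\<sigma> \<tau> s. \<sigma> \<in> pol1 G \<Longrightarrow> \<tau> \<in> pol2 G \<Longrightarrow> \<bar>infostate_payoff G \<sigma> \<tau> s\<bar> \<le> B"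
proof
  define M where "M h = (\<Sum>a\<in>P1 G (info1 G h). \<Sum>b\<in>P2 G (info2 G h). \<bar>u G h a b\<bar>)" for h
  fix \<sigma> \<tau> s assume "\<sigma> \<in> pol1 G" "\<tau> \<in> pol2 G"
  then have "\<bar>hval G \<sigma> \<tau> h\<bar> \<le> sum M UNIV" for h
    using abs_hval_le[OF wf] member_le_sum[of h UNIV M]
    by (force simp: M_def intro: order_trans sum_nonneg)
  moreover have "0 \<le> cond G s h" for h
    using wf by (simp add: wf_subgame_def)
  ultimately have "\<bar>infostate_payoff G \<sigma> \<tau> s\<bar> \<le> (\<Sum>h\<in>{h. info1 G h = s}. cond G s h * sum M UNIV)"
    unfolding infostate_payoff_def
    by (intro order_trans[OF sum_abs] sum_mono) (simp add: abs_mult mult_left_mono)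
  also have "\<dots> = sum M UNIV"
    using wf by (simp add: wf_subgame_def flip: sum_distrib_right)
  finally show "\<bar>infostate_payoff G \<sigma> \<tau> s\<bar> \<le> sum M UNIV" .
qed

lemma bdd_above_infostate_payoff:
  assumes "wf_subgame G" and "\<tau> \<in> pol2 G"
  shows "bdd_above ((\<lambda>\<sigma>. infostate_payoff G \<sigma> \<tau> s) ` pol1 G)"
proof -
  obtain B where "\<And>\<sigma>. \<sigma> \<in> pol1 G \<Longrightarrow> infostate_payoff G \<sigma> \<tau> s \<le> B"
    using infostate_payoff_bounded assms by (metis abs_le_D1)
  then show ?thesis by (intro bdd_aboveI2)
qed

lemma infostate_payoff_le_info_value:
  assumes "wf_subgame G" and "\<sigma> \<in> pol1 G" and "\<tau> \<in> pol2 G"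
  shows "infostate_payoff G \<sigma> \<tau> s \<le> info_value G \<tau> s"
  unfolding info_value_eq_SUP_infostate_payoff
  using assms by (intro cSUP_upper bdd_above_infostate_payoff)

definition best_response_value :: "('s1::finite, 's2::finite, 'h::finite, 'a, 'b) subgame \<Rightarrow>
    ('s2 \<Rightarrow> 'b \<Rightarrow> real) \<Rightarrow> real ^ 's1 \<Rightarrow> real" where
  "best_response_value G \<tau> x = (\<Sum>s\<in>UNIV. x $ s * info_value G \<tau> s)"

lemma SUP_Vpol_eq_best_response_value:
  assumes "wf_subgame G" and "\<tau> \<in> pol2 G" and "\<forall>s. 0 \<le> x $ s"
  shows "(SUP \<sigma>\<in>pol1 G. Vpol G x \<sigma> \<tau>) = best_response_value G \<tau> x"
  unfolding Vpol_eq_sum_infostate_payoff best_response_value_def info_value_eq_SUP_infostate_payoff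
  using assms pol1_nonempty infostate_payoff_cong bdd_above_infostate_payoff
  by (intro cSUP_sum_coordinatewise) (auto simp: pol1_def)

lemma Vpol_le_best_response_value:
  assumes "wf_subgame G" and "\<sigma> \<in> pol1 G" and "\<tau> \<in> pol2 G" and "\<forall>s. 0 \<le> x $ s"
  shows "Vpol G x \<sigma> \<tau> \<le> best_response_value G \<tau> x"
  unfolding Vpol_eq_sum_infostate_payoff best_response_value_def
  using assms by (intro sum_mono mult_left_mono infostate_payoff_le_info_value) auto

lemma bdd_below_best_response_value:
  assumes wf: "wf_subgame G" and x: "\<forall>s. 0 \<le> x $ s"
  shows "bdd_below ((\<lambda>\<tau>. best_response_value G \<tau> x) ` pol2 G)"
proof -
  obtain B where B: "\<And>\<sigma> \<tau> s. \<sigma> \<in> pol1 G \<Longrightarrow> \<tau> \<in> pol2 G \<Longrightarrow> \<bar>infostate_payoff G \<sigma> \<tau> s\<bar> \<le> B"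
    using infostate_payoff_bounded[OF wf] by blast
  obtain \<sigma> where \<sigma>: "\<sigma> \<in> pol1 G" using pol1_nonempty[OF wf] by blast
  have "- B \<le> info_value G \<tau> s" if "\<tau> \<in> pol2 G" for \<tau> s
    using B[OF \<sigma> that, of s] infostate_payoff_le_info_value[OF wf \<sigma> that, of s] by linarith
  then have "(\<Sum>s\<in>UNIV. x $ s * - B) \<le> best_response_value G \<tau> x" if "\<tau> \<in> pol2 G" for \<tau>
    unfolding best_response_value_def using x that by (intro sum_mono mult_left_mono) auto
  then show ?thesis by (intro bdd_belowI2)
qed

lemma game_value_eq_INF_best_response_value:
  assumes "wf_subgame G" and "\<forall>s. 0 \<le> x $ s"
  shows "game_value G x = (INF \<tau>\<in>pol2 G. best_response_value G \<tau> x)"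
  unfolding game_value_def using assms by (simp add: SUP_Vpol_eq_best_response_value)

lemma game_value_le_best_response_value:
  assumes "wf_subgame G" and "\<forall>s. 0 \<le> x $ s" and "\<tau> \<in> pol2 G"
  shows "game_value G x \<le> best_response_value G \<tau> x"
  unfolding game_value_eq_INF_best_response_value[OF assms(1,2)]
  by (rule cINF_lower[OF bdd_below_best_response_value[OF assms(1,2)] assms(3)])

lemma concave_on_best_response_value:
  assumes "convex S"
  shows "concave_on S (best_response_value G \<tau>)"
  unfolding concave_on_iff best_response_value_def
  using assms by (simp add: sum.distrib sum_distrib_left algebra_simps)

lemma concave_on_game_value:
  assumes wf: "wf_subgame G"
  shows "concave_on nonneg_orthant (game_value G)"
proof -
  have "concave_on nonneg_orthant (\<lambda>x. INF \<tau>\<in>pol2 G. best_response_value G \<tau> x)"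
    using wf pol2_nonempty convex_nonneg_orthant concave_on_best_response_value
      bdd_below_best_response_value
    by (intro concave_on_INF) (auto simp: nonneg_orthant_def)
  then show ?thesis
    using wf by (subst concave_on_cong)
      (auto simp: nonneg_orthant_def game_value_eq_INF_best_response_value)
qed

lemma game_value_at_NE:
  assumes wf: "wf_subgame G" and x: "\<forall>s. 0 \<le> x $ s" and NE: "is_NE G x \<sigma>1 \<sigma>2"
  shows "game_value G x = best_response_value G \<sigma>2 x"
proof -
  have \<sigma>1: "\<sigma>1 \<in> pol1 G" and \<sigma>2: "\<sigma>2 \<in> pol2 G"
    and br1: "\<And>\<tau>. \<tau> \<in> pol1 G \<Longrightarrow> Vpol G x \<tau> \<sigma>2 \<le> Vpol G x \<sigma>1 \<sigma>2"
    and br2: "\<And>\<tau>. \<tau> \<in> pol2 G \<Longrightarrow> Vpol G x \<sigma>1 \<sigma>2 \<le> Vpol G x \<sigma>1 \<tau>"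
    using NE by (auto simp: is_NE_def)
  have "best_response_value G \<sigma>2 x = (SUP \<tau>\<in>pol1 G. Vpol G x \<tau> \<sigma>2)"
    using SUP_Vpol_eq_best_response_value[OF wf \<sigma>2 x] by simp
  also have "\<dots> = Vpol G x \<sigma>1 \<sigma>2"
    using \<sigma>1 br1 by (intro cSup_eq_maximum) auto
  finally have BR: "best_response_value G \<sigma>2 x = Vpol G x \<sigma>1 \<sigma>2" .
  have "best_response_value G \<sigma>2 x \<le> best_response_value G \<tau> x" if "\<tau> \<in> pol2 G" for \<tau>
    using BR br2[OF that] Vpol_le_best_response_value[OF wf \<sigma>1 that x] by linarith
  then show ?thesis
    unfolding game_value_eq_INF_best_response_value[OF wf x]
    using \<sigma>2 by (intro cInf_eq_minimum) auto
qed

theorem theorem1: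
  fixes G :: "('s1::finite, 's2::finite, 'h::finite, 'a, 'b) subgame"
    and \<beta>1 :: "real ^ 's1"
    and \<sigma>1 :: "'s1 \<Rightarrow> 'a \<Rightarrow> real" and \<sigma>2 :: "'s2 \<Rightarrow> 'b \<Rightarrow> real"
  assumes "wf_subgame G"
    and "prob_vec \<beta>1"
    and "is_NE G \<beta>1 \<sigma>1 \<sigma>2"
  shows "\<exists>(Vt :: real ^ 's1 \<Rightarrow> real) (g :: real ^ 's1).
           concave_on nonneg_orthant Vt \<and>
           (\<forall>x. prob_vec x \<longrightarrow> Vt x = game_value G x) \<and>
           (\<forall>y\<in>nonneg_orthant. Vt y \<le> Vt \<beta>1 + g \<bullet> (y - \<beta>1)) \<and>
           (\<forall>s1. info_value G \<sigma>2 s1 = game_value G \<beta>1 + g \<bullet> axis s1 1)"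
proof -
  note wf = assms(1)
  have \<beta>1: "\<forall>s. 0 \<le> \<beta>1 $ s" "(\<Sum>s\<in>UNIV. \<beta>1 $ s) = 1" and \<sigma>2: "\<sigma>2 \<in> pol2 G"
    using assms(2,3) by (auto simp: prob_vec_def is_NE_def)
  define V where "V = game_value G \<beta>1"
  define Vt where "Vt x = game_value G x + V * (1 - (\<Sum>s\<in>UNIV. x $ s))" for x :: "real ^ 's1"
  define g where "g = (\<chi> s. info_value G \<sigma>2 s - V)"
  have "concave_on nonneg_orthant Vt"
    unfolding Vt_def
    by (intro concave_on_add concave_on_game_value concave_on_mult_one_minus_sum
        convex_nonneg_orthant wf)
  moreover have "Vt y \<le> Vt \<beta>1 + g \<bullet> (y - \<beta>1)" if "y \<in> nonneg_orthant" for y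
  proof -
    have y: "\<forall>s. 0 \<le> y $ s" using that by (simp add: nonneg_orthant_def)
    have "g \<bullet> (y - \<beta>1) = best_response_value G \<sigma>2 y - best_response_value G \<sigma>2 \<beta>1
        - V * ((\<Sum>s\<in>UNIV. y $ s) - (\<Sum>s\<in>UNIV. \<beta>1 $ s))"
      unfolding g_def inner_vec_def best_response_value_def
      by (simp add: algebra_simps sum.distrib sum_subtractf sum_distrib_left)
    moreover have "V = best_response_value G \<sigma>2 \<beta>1"
      unfolding V_def by (rule game_value_at_NE[OF wf \<beta>1(1) assms(3)])
    ultimately show ?thesis
      using game_value_le_best_response_value[OF wf y \<sigma>2] \<beta>1(2)
      by (simp add: Vt_def V_def algebra_simps)
  qed
  moreover have "info_value G \<sigma>2 s = V + g \<bullet> axis s 1" for s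
    by (simp add: inner_axis g_def)
  ultimately show ?thesis
    by (intro exI[of _ Vt] exI[of _ g]) (auto simp: Vt_def V_def prob_vec_def)
qed

end
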